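(* Let $(a_1,\rho_1)\in(0,\infty)\times(0,\infty)$ satisfy $h(a_1,\rho_1)\ge0$. Then for every $a_2\in(0,a_1]$ one has $h(a_2,\rho_2)\ge0$ for all $\rho_2\in\big[\frac{a_2}{a_1}\rho_1,\rho_1\big]$.
   Context: Fix $2<q<\frac{10}{3}<p<6$ and $\mu>0$. For $h:\mathbb{R}^2\to\mathbb{R}$ let $D_x^{-1}h(x,y)=\int_{-\infty}^x h(s,y)\,ds$; let $X$ be the Hilbert space obtained as the completion (in the a.e.-limit sense) of $\{g_x:g\in C_0^\infty(\mathbb{R}^2)\}$ under the norm $\big(\int_{\mathbb{R}^2}(|u_x|^2+|D_x^{-1}u_y|^2+u^2)\big)^{1/2}$, and $\|u\|_0^2=\int_{\mathbb{R}^2}(|u_x|^2+|D_x^{-1}u_y|^2)$. Let $S>0$ be a constant with $|u|_6\le S\|u\|_0$ for all $u\in X$; for $r\in[2,6]$ set $\beta_r=\frac32-\frac3r$ and $C_r=S^{r\beta_r}$. Define $h:(0,\infty)\times(0,\infty)\to\mathbb{R}$ by $$h(a,\rho)=\frac12-\frac{\mu}{q}C_q\rho^{q\beta_q-2}a^{(1-\beta_q)q}-\frac1pC_p\rho^{p\beta_p-2}a^{(1-\beta_p)p}.$$ *)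

theory Defs
  imports Complex_Main
begin

definition beta_r :: "real \<Rightarrow> real" where
  "beta_r r = 3/2 - 3/r"

definition C_r :: "real \<Rightarrow> real \<Rightarrow> real" where
  "C_r S r = S powr (r * beta_r r)"

definition hfun :: "real \<Rightarrow> real \<Rightarrow> real \<Rightarrow> real \<Rightarrow> real \<Rightarrow> real \<Rightarrow> real" where
  "hfun q p \<mu> S a \<rho> =
     1/2 - (\<mu> / q) * C_r S q * \<rho> powr (q * beta_r q - 2) * a powr ((1 - beta_r q) * q)
         - (1 / p) * C_r S p * \<rho> powr (p * beta_r p - 2) * a powr ((1 - beta_r p) * p)"

end

theory Submission
  imports Defs
begin

text \<open>Both terms of h are nonnegative multiples of monomials \<rho>^e a^f, and it suffices
  that neither monomial grows. For p the exponents e = 3p/2 - 5 and f = 3 - p/2 are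
  nonnegative, so the monomial decreases when \<rho> and a do. For q the exponent
  e = 3q/2 - 5 is nonpositive but the total degree e + f = q - 2 is nonnegative,
  so it decreases along the segment from (a1,\<rho>1) to (a2, a2/a1 \<rho>1) and also
  when \<rho> increases from there.\<close>

lemma mult_beta_r_minus_two: "r \<noteq> 0 \<Longrightarrow> r * beta_r r - 2 = 3/2 * r - 5"
  by (simp add: beta_r_def field_simps)

lemma one_minus_beta_r_mult: "r \<noteq> 0 \<Longrightarrow> (1 - beta_r r) * r = 3 - r/2"
  by (simp add: beta_r_def field_simps)

lemma powr_mult_powr_le_scaled:
  fixes e f a a' \<rho> \<rho>' :: real
  assumes "e \<le> 0" "0 \<le> e + f" "0 < a'" "a' \<le> a" "0 < \<rho>" "a' / a * \<rho> \<le> \<rho>'"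
  shows "\<rho>' powr e * a' powr f \<le> \<rho> powr e * a powr f"
proof -
  have t_pos: "0 < a' / a" and t_le1: "a' / a \<le> 1"
    using assms(3,4) by auto
  have "0 < a' / a * \<rho>"
    using t_pos assms(5) by (rule mult_pos_pos)
  have "\<rho>' powr e * a' powr f \<le> (a' / a * \<rho>) powr e * a' powr f"
    using \<open>0 < a' / a * \<rho>\<close>
    by (intro mult_right_mono powr_mono2'[OF assms(1) _ assms(6)]) simp_all
  also have "\<dots> = \<rho> powr e * a powr f * (a' / a) powr (e + f)"
    using assms(3,4,5) by (simp add: powr_mult powr_divide powr_add field_simps)
  also have "\<dots> \<le> \<rho> powr e * a powr f"
    using powr_le1[OF assms(2)] t_pos t_le1 by (simp add: mult_left_le)
  finally show ?thesis .
qed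

lemma powr_mult_powr_mono:
  fixes e f a a' \<rho> \<rho>' :: real
  assumes "0 \<le> e" "0 \<le> f" "0 \<le> a'" "a' \<le> a" "0 \<le> \<rho>'" "\<rho>' \<le> \<rho>"
  shows "\<rho>' powr e * a' powr f \<le> \<rho> powr e * a powr f"
  using assms by (intro mult_mono powr_mono2) auto

lemma hfun_le_hfun:
  assumes "0 \<le> \<mu>" "0 < q" "0 < p"
    and "\<rho>' powr (q * beta_r q - 2) * a' powr ((1 - beta_r q) * q)
         \<le> \<rho> powr (q * beta_r q - 2) * a powr ((1 - beta_r q) * q)"
    and "\<rho>' powr (p * beta_r p - 2) * a' powr ((1 - beta_r p) * p)
         \<le> \<rho> powr (p * beta_r p - 2) * a powr ((1 - beta_r p) * p)"
  shows "hfun q p \<mu> S a \<rho> \<le> hfun q p \<mu> S a' \<rho>'"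
proof -
  have "0 \<le> \<mu> / q * C_r S q" "0 \<le> 1 / p * C_r S p"
    using assms(1-3) by (auto simp: C_r_def)
  with assms(4,5) have "\<mu> / q * C_r S q * (\<rho>' powr (q * beta_r q - 2) * a' powr ((1 - beta_r q) * q))
      + 1 / p * C_r S p * (\<rho>' powr (p * beta_r p - 2) * a' powr ((1 - beta_r p) * p))
    \<le> \<mu> / q * C_r S q * (\<rho> powr (q * beta_r q - 2) * a powr ((1 - beta_r q) * q))
      + 1 / p * C_r S p * (\<rho> powr (p * beta_r p - 2) * a powr ((1 - beta_r p) * p))"
    by (intro add_mono mult_left_mono)
  then show ?thesis
    unfolding hfun_def by (simp only: mult.assoc)
qed

theorem lemma5p2:
  fixes q p \<mu> S a1 \<rho>1 :: real
  assumes "2 < q" and "q < 10/3" and "10/3 < p" and "p < 6"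
    and "\<mu> > 0" and "S > 0"
    and "a1 > 0" and "\<rho>1 > 0"
    and "hfun q p \<mu> S a1 \<rho>1 \<ge> 0"
  shows "\<forall>a2 \<in> {0<..a1}. \<forall>\<rho>2 \<in> {a2 / a1 * \<rho>1 .. \<rho>1}. hfun q p \<mu> S a2 \<rho>2 \<ge> 0"
proof (intro ballI)
  fix a2 \<rho>2
  assume a2: "a2 \<in> {0<..a1}" and \<rho>2: "\<rho>2 \<in> {a2 / a1 * \<rho>1 .. \<rho>1}"
  have "0 < a2 / a1 * \<rho>1"
    using a2 assms(7,8) by simp
  with \<rho>2 have "0 < \<rho>2" by simp
  have "hfun q p \<mu> S a1 \<rho>1 \<le> hfun q p \<mu> S a2 \<rho>2"
  proof (rule hfun_le_hfun)
    show "\<rho>2 powr (q * beta_r q - 2) * a2 powr ((1 - beta_r q) * q)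
          \<le> \<rho>1 powr (q * beta_r q - 2) * a1 powr ((1 - beta_r q) * q)"
      using assms(1,2,8) a2 \<rho>2
      by (intro powr_mult_powr_le_scaled) (auto simp: mult_beta_r_minus_two one_minus_beta_r_mult)
    show "\<rho>2 powr (p * beta_r p - 2) * a2 powr ((1 - beta_r p) * p)
          \<le> \<rho>1 powr (p * beta_r p - 2) * a1 powr ((1 - beta_r p) * p)"
      using assms(3,4) a2 \<rho>2 \<open>0 < \<rho>2\<close>
      by (intro powr_mult_powr_mono) (auto simp: mult_beta_r_minus_two one_minus_beta_r_mult)
  qed (use assms(1,3,5) in auto)
  with assms(9) show "hfun q p \<mu> S a2 \<rho>2 \<ge> 0" by linarith
qed

end
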